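(* Let $\mathcal F$ be a finite set of edge-colored graphs (edge colors $[r]$) such that for every color $i\in[r]$ there exists an $\mathcal F$-safe colored $i$-determiner. Then for every $d\in\mathbb N$ and every $i\in[r]$ there exists an $\mathcal F$-safe $d$-remote colored $i$-determiner.
   Context: Graphs are finite simple undirected. An edge-colored graph is $(G,\gamma)$, $\gamma\colon E(G)\to[r]$. $(G,\gamma)$ is $\mathcal F$-free if there is no $(F,\phi)\in\mathcal F$ and graph homomorphism $h\colon F\to G$ with $\gamma(h(e))=\phi(e)$ for all $e\in E(F)$. A partially edge-colored graph is $(G,\xi)$ with $\xi\colon S\to[r]$, $S=\mathrm{dom}(\xi)\subseteq E(G)$; an extension of $\xi$ is $\gamma\colon E(G)\to[r]$ with $\gamma|_S=\xi$. Gluing: for graphs $G,H$ with pairwise disjoint edges $e_1,\dots,e_k\in E(G)$, $f_1,\dots,f_k\in E(H)$, $G\oplus H$ is obtained from the disjoint union by identifying $e_j$ with $f_j$ for each $j$ (identifying endpoints in some way). $(G,\xi)$ with pairwise disjoint edges $e_1,\dots,e_k\notin\mathrm{dom}(\xi)$ is $\mathcal F$-safe along $e_1,\dots,e_k$ if (a) $\xi$ has an $\mathcal F$-free extension, and (b) for every $\mathcal F$-free $(H,\gamma_H)$ and pairwise disjoint $f_1,\dots,f_k\in E(H)$ such that some $\mathcal F$-free extension $\gamma$ of $\xi$ satisfies $\gamma(e_j)=\gamma_H(f_j)$ for all $j$, and every way of forming $G\oplus H$, the partial coloring $\xi\cup\gamma_H$ of $G\oplus H$ has an $\mathcal F$-free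 extension. $\mathrm{dist}(e,e')$ is the minimum shortest-path distance between an endpoint of $e$ and one of $e'$; $\mathrm{dist}(e,S)=\min_{e'\in S}\mathrm{dist}(e,e')$. A colored $i$-determiner is $(G,\xi,e)$ with $e\in E(G)\setminus\mathrm{dom}(\xi)$ such that (1) one endpoint of $e$ is incident to no edge of $\mathrm{dom}(\xi)$, (2) $\xi$ has an $\mathcal F$-free extension, (3) every $\mathcal F$-free extension $\gamma$ of $\xi$ has $\gamma(e)=i$. It is $d$-remote if $\mathrm{dist}(e,\mathrm{dom}(\xi))\ge d$, and $\mathcal F$-safe if $(G,\xi)$ is $\mathcal F$-safe along $e$. *)

theory Defs
  imports Main
begin

definition graph :: "'v set \<Rightarrow> 'v set set \<Rightarrow> bool" where
  "graph V E \<longleftrightarrow> finite V \<and> (\<forall>e\<in>E. e \<subseteq> V \<and> card e = 2)"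

definition coloring :: "nat \<Rightarrow> 'v set set \<Rightarrow> ('v set \<Rightarrow> nat) \<Rightarrow> bool" where
  "coloring r E \<gamma> \<longleftrightarrow> (\<forall>e\<in>E. \<gamma> e \<in> {1..r})"

definition pcoloring :: "nat \<Rightarrow> 'v set set \<Rightarrow> ('v set \<rightharpoonup> nat) \<Rightarrow> bool" where
  "pcoloring r E \<xi> \<longleftrightarrow> dom \<xi> \<subseteq> E \<and> ran \<xi> \<subseteq> {1..r}"

definition extension :: "nat \<Rightarrow> 'v set set \<Rightarrow> ('v set \<rightharpoonup> nat) \<Rightarrow> ('v set \<Rightarrow> nat) \<Rightarrow> bool" where
  "extension r E \<xi> \<gamma> \<longleftrightarrow> coloring r E \<gamma> \<and> (\<forall>e\<in>dom \<xi>. \<xi> e = Some (\<gamma> e))"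

definition col_hom :: "'a set \<Rightarrow> 'a set set \<Rightarrow> ('a set \<Rightarrow> nat) \<Rightarrow> 'v set \<Rightarrow> 'v set set \<Rightarrow> ('v set \<Rightarrow> nat) \<Rightarrow> ('a \<Rightarrow> 'v) \<Rightarrow> bool" where
  "col_hom VF EF \<phi> V E \<gamma> h \<longleftrightarrow> h ` VF \<subseteq> V \<and> (\<forall>e\<in>EF. h ` e \<in> E \<and> \<gamma> (h ` e) = \<phi> e)"

definition Ffree :: "('a set \<times> 'a set set \<times> ('a set \<Rightarrow> nat)) set \<Rightarrow> 'v set \<Rightarrow> 'v set set \<Rightarrow> ('v set \<Rightarrow> nat) \<Rightarrow> bool" where
  "Ffree \<F> V E \<gamma> \<longleftrightarrow> \<not> (\<exists>(VF, EF, \<phi>)\<in>\<F>. \<exists>h. col_hom VF EF \<phi> V E \<gamma> h)"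

definition pairwise_disj_list :: "'v set list \<Rightarrow> bool" where
  "pairwise_disj_list es \<longleftrightarrow> (\<forall>i<length es. \<forall>j<length es. i \<noteq> j \<longrightarrow> es ! i \<inter> es ! j = {})"

text \<open>(VK,EK) is a way of forming G (+) H, gluing edge es!j of G to fs!j of H:
  g and h are the (injective) embeddings of G and H into K, K is the union of the images,
  the images intersect exactly in the identified edges, and es!j is identified with fs!j.\<close>
definition glued :: "'v set \<Rightarrow> 'v set set \<Rightarrow> 'w set \<Rightarrow> 'w set set \<Rightarrow> 'v set list \<Rightarrow> 'w set list
    \<Rightarrow> 'u set \<Rightarrow> 'u set set \<Rightarrow> ('v \<Rightarrow> 'u) \<Rightarrow> ('w \<Rightarrow> 'u) \<Rightarrow> bool" where
  "glued V E VH EH es fs VK EK g h \<longleftrightarrow>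
     inj_on g V \<and> inj_on h VH \<and>
     VK = g ` V \<union> h ` VH \<and>
     EK = (\<lambda>e. g ` e) ` E \<union> (\<lambda>f. h ` f) ` EH \<and>
     g ` V \<inter> h ` VH = (\<Union>j<length es. g ` (es ! j)) \<and>
     (\<forall>j<length es. g ` (es ! j) = h ` (fs ! j))"

text \<open>(G,xi) is F-safe along the edges es. All graphs H and glued graphs K range over
  finite graphs with vertices in nat (every finite graph is isomorphic to such a graph).\<close>
definition safe :: "nat \<Rightarrow> ('a set \<times> 'a set set \<times> ('a set \<Rightarrow> nat)) set \<Rightarrow> nat set \<Rightarrow> nat set set
    \<Rightarrow> (nat set \<rightharpoonup> nat) \<Rightarrow> nat set list \<Rightarrow> bool" where
  "safe r \<F> V E \<xi> es \<longleftrightarrow>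
     set es \<subseteq> E \<and> set es \<inter> dom \<xi> = {} \<and> distinct es \<and> pairwise_disj_list es \<and>
     (\<exists>\<gamma>. extension r E \<xi> \<gamma> \<and> Ffree \<F> V E \<gamma>) \<and>
     (\<forall>(VH::nat set) EH \<gamma>H fs.
        graph VH EH \<and> coloring r EH \<gamma>H \<and> Ffree \<F> VH EH \<gamma>H \<and>
        length fs = length es \<and> set fs \<subseteq> EH \<and> distinct fs \<and> pairwise_disj_list fs \<and>
        (\<exists>\<gamma>. extension r E \<xi> \<gamma> \<and> Ffree \<F> V E \<gamma> \<and>
              (\<forall>j<length es. \<gamma> (es ! j) = \<gamma>H (fs ! j)))
        \<longrightarrow> (\<forall>(VK::nat set) EK g h. glued V E VH EH es fs VK EK g h \<longrightarrow>
               (\<exists>\<gamma>K. coloring r EK \<gamma>K \<and> Ffree \<F> VK EK \<gamma>K \<and>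
                     (\<forall>e\<in>dom \<xi>. \<xi> e = Some (\<gamma>K (g ` e))) \<and>
                     (\<forall>f\<in>EH. \<gamma>K (h ` f) = \<gamma>H f))))"

definition walk_len :: "'v set set \<Rightarrow> 'v \<Rightarrow> 'v \<Rightarrow> nat \<Rightarrow> bool" where
  "walk_len E u v n \<longleftrightarrow> (\<exists>p. length p = Suc n \<and> p ! 0 = u \<and> p ! n = v \<and>
                               (\<forall>i<n. {p ! i, p ! Suc i} \<in> E))"

text \<open>dist(e, S) >= d (with the minimum over an empty set / disconnected pairs being infinite).\<close>
definition remote :: "nat \<Rightarrow> 'v set set \<Rightarrow> 'v set \<Rightarrow> 'v set set \<Rightarrow> bool" where
  "remote d E e S \<longleftrightarrow> (\<forall>e'\<in>S. \<forall>u\<in>e. \<forall>v\<in>e'. \<forall>n<d. \<not> walk_len E u v n)"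

definition determiner :: "nat \<Rightarrow> ('a set \<times> 'a set set \<times> ('a set \<Rightarrow> nat)) set \<Rightarrow> 'v set \<Rightarrow> 'v set set
    \<Rightarrow> ('v set \<rightharpoonup> nat) \<Rightarrow> 'v set \<Rightarrow> nat \<Rightarrow> bool" where
  "determiner r \<F> V E \<xi> e i \<longleftrightarrow>
     graph V E \<and> pcoloring r E \<xi> \<and> e \<in> E \<and> e \<notin> dom \<xi> \<and>
     (\<exists>x\<in>e. \<forall>e'\<in>dom \<xi>. x \<notin> e') \<and>
     (\<exists>\<gamma>. extension r E \<xi> \<gamma> \<and> Ffree \<F> V E \<gamma>) \<and>
     (\<forall>\<gamma>. extension r E \<xi> \<gamma> \<and> Ffree \<F> V E \<gamma> \<longrightarrow> \<gamma> e = i)"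

end

theory Submission
  imports Defs
begin

(* A safe i-forcer is a partially coloured graph with an uncoloured edge e that every F-free
   extension colours i and along which the graph is F-safe; a safe i-determiner is a safe i-forcer
   in which e has an endpoint outside all precoloured edges.

   The basic operation replaces a precoloured edge f of colour c by a fresh copy of a safe c-forcer,
   glued along its distinguished edge. F-free extensions of the result restrict to F-free extensions
   of the original graph, since the copy forces colour c on f; conversely, safety of the copy extends
   any F-free extension of the original graph, or of a graph glued to it along e, over the copy.
   Hence the result is again a safe i-forcer.

   Replacing the precoloured edges that meet e by determiners, with the free endpoint sent to the end
   of f that may lie on e, makes all precoloured edges disjoint from e. Using such isolated forcers as
   copies, replacing every precoloured edge raises by one the level of a potential that changes by at
   most one along edges, vanishes on e and is at least the level on precoloured edges. A potential of
   level d + 1 provides both the free endpoint and distance at least d. *)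

lemma graph_finite_edges: "graph V E \<Longrightarrow> finite E"
  unfolding graph_def by (metis Pow_iff finite_Pow_iff rev_finite_subset subsetI)

lemma graph_edgeE:
  assumes "graph V E" "f \<in> E"
  obtains a b where "f = {a, b}" "a \<noteq> b" "a \<in> V" "b \<in> V"
proof -
  have "f \<subseteq> V" "card f = 2" using assms unfolding graph_def by auto
  then show thesis using that by (auto simp: card_2_iff)
qed

lemma graph_edge_subset_eq:
  assumes "graph V E" "e \<in> E" "f \<in> E" "f \<subseteq> e"
  shows "f = e"
proof -
  have "card e = 2" "card f = 2" using assms(1-3) unfolding graph_def by auto
  then show ?thesis using card_subset_eq[OF _ assms(4)] by (simp add: card_ge_0_finite)
qed

lemma graph_edge_other_end:
  assumes "graph V E" "e \<in> E" "p \<in> e"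
  obtains q where "e = {p, q}" "p \<noteq> q"
proof -
  obtain a b where ab: "e = {a, b}" "a \<noteq> b" using graph_edgeE[OF assms(1,2)] by blast
  show thesis
  proof (cases "p = a")
    case True
    show thesis by (rule that[of b]) (use ab True in auto)
  next
    case False
    then have "p = b" using ab(1) assms(3) by blast
    show thesis by (rule that[of a]) (use ab \<open>p = b\<close> in auto)
  qed
qed

lemma graph_edge_leaving:
  assumes "graph V E" "f \<in> E" "e \<in> E" "f \<noteq> e"
  obtains a b where "f = {a, b}" "a \<noteq> b" "b \<notin> e"
proof -
  obtain a b where ab: "f = {a, b}" "a \<noteq> b" using graph_edgeE[OF assms(1,2)] by blast
  have "\<not> f \<subseteq> e" using graph_edge_subset_eq[OF assms(1,3,2)] assms(4) by blast
  then consider "b \<notin> e" | "a \<notin> e" using ab(1) by blast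
  then show thesis
  proof cases
    case 1
    show thesis by (rule that[of a b]) (use ab 1 in auto)
  next
    case 2
    show thesis by (rule that[of b a]) (use ab 2 in auto)
  qed
qed

lemma graph_image_edge:
  assumes "graph V E" "inj_on g V" "e \<in> E"
  shows "g ` e \<subseteq> g ` V" "card (g ` e) = 2"
proof -
  have "e \<subseteq> V" "card e = 2" using assms(1,3) unfolding graph_def by auto
  then show "g ` e \<subseteq> g ` V" "card (g ` e) = 2"
    using card_image[OF inj_on_subset[OF assms(2)]] by auto
qed

lemma graph_glued:
  assumes "graph V E" "graph VH EH" "inj_on g V" "inj_on h VH"
  shows "graph (g ` V \<union> h ` VH) ((\<lambda>e. g ` e) ` E \<union> (\<lambda>f. h ` f) ` EH)"
  unfolding graph_def
proof
  show "finite (g ` V \<union> h ` VH)" using assms(1,2) unfolding graph_def by blast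
  show "\<forall>e'\<in>(\<lambda>e. g ` e) ` E \<union> (\<lambda>f. h ` f) ` EH. e' \<subseteq> g ` V \<union> h ` VH \<and> card e' = 2"
    using graph_image_edge[OF assms(1,3)] graph_image_edge[OF assms(2,4)] by blast
qed

lemma col_hom_comp:
  assumes "col_hom VF EF \<phi> V E (\<lambda>e. \<gamma> (g ` e)) h" "g ` V \<subseteq> V'" "\<forall>e\<in>E. g ` e \<in> E'"
  shows "col_hom VF EF \<phi> V' E' \<gamma> (g \<circ> h)"
  using assms unfolding col_hom_def image_comp[symmetric] by blast

lemma Ffree_pullback:
  assumes "Ffree F V' E' \<gamma>" "g ` V \<subseteq> V'" "\<forall>e\<in>E. g ` e \<in> E'"
  shows "Ffree F V E (\<lambda>e. \<gamma> (g ` e))"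
  unfolding Ffree_def
proof clarify
  fix VF EF \<phi> h
  assume F: "(VF, EF, \<phi>) \<in> F" and hom: "col_hom VF EF \<phi> V E (\<lambda>e. \<gamma> (g ` e)) h"
  have "col_hom VF EF \<phi> V' E' \<gamma> (g \<circ> h)" using col_hom_comp[OF hom assms(2,3)] .
  with F assms(1) show False unfolding Ffree_def by blast
qed

lemma Ffree_subgraph:
  assumes "Ffree F V' E' \<gamma>" "V \<subseteq> V'" "E \<subseteq> E'"
  shows "Ffree F V E \<gamma>"
  using Ffree_pullback[of F V' E' \<gamma> id V E] assms by auto

definition glued_free_extension :: "nat \<Rightarrow> ('a set \<times> 'a set set \<times> ('a set \<Rightarrow> nat)) set
    \<Rightarrow> 'v set \<Rightarrow> 'v set set \<Rightarrow> ('v set \<rightharpoonup> nat) \<Rightarrow> 'w set \<Rightarrow> 'w set set \<Rightarrow> ('w set \<Rightarrow> nat)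
    \<Rightarrow> ('v \<Rightarrow> 'u) \<Rightarrow> ('w \<Rightarrow> 'u) \<Rightarrow> ('u set \<Rightarrow> nat) \<Rightarrow> bool" where
  "glued_free_extension r F V E \<xi> VH EH \<gamma>H g h \<gamma>K \<longleftrightarrow>
     coloring r ((\<lambda>e. g ` e) ` E \<union> (\<lambda>f. h ` f) ` EH) \<gamma>K \<and>
     Ffree F (g ` V \<union> h ` VH) ((\<lambda>e. g ` e) ` E \<union> (\<lambda>f. h ` f) ` EH) \<gamma>K \<and>
     (\<forall>e\<in>dom \<xi>. \<xi> e = Some (\<gamma>K (g ` e))) \<and> (\<forall>f\<in>EH. \<gamma>K (h ` f) = \<gamma>H f)"

lemma glued_single_iff:
  "glued V E VH EH [e] [f] VK EK g h \<longleftrightarrow>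
     inj_on g V \<and> inj_on h VH \<and> VK = g ` V \<union> h ` VH \<and>
     EK = (\<lambda>e. g ` e) ` E \<union> (\<lambda>f. h ` f) ` EH \<and> g ` V \<inter> h ` VH = g ` e \<and> g ` e = h ` f"
  unfolding glued_def by auto

lemma safe_singleD:
  fixes VH :: "nat set" and g h :: "nat \<Rightarrow> nat"
  assumes "safe r F V E \<xi> [e]" "graph VH EH" "coloring r EH \<gamma>H" "Ffree F VH EH \<gamma>H" "fH \<in> EH"
    "extension r E \<xi> \<gamma>" "Ffree F V E \<gamma>" "\<gamma> e = \<gamma>H fH"
    "inj_on g V" "inj_on h VH" "g ` V \<inter> h ` VH = g ` e" "g ` e = h ` fH"
  obtains \<gamma>K where "glued_free_extension r F V E \<xi> VH EH \<gamma>H g h \<gamma>K"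
proof -
  note gluing = assms(1)[unfolded safe_def, THEN conjunct2, THEN conjunct2, THEN conjunct2,
      THEN conjunct2, THEN conjunct2, rule_format]
  have "glued V E VH EH [e] [fH] (g ` V \<union> h ` VH) ((\<lambda>e. g ` e) ` E \<union> (\<lambda>f. h ` f) ` EH) g h"
    using assms(9-12) unfolding glued_single_iff by blast
  from gluing[OF _ this] have "\<exists>\<gamma>K. glued_free_extension r F V E \<xi> VH EH \<gamma>H g h \<gamma>K"
    unfolding glued_free_extension_def
    using assms(2-8) by (auto simp: pairwise_disj_list_def)
  with that show thesis by blast
qed

lemma safe_singleI:
  assumes "e \<in> E" "e \<notin> dom \<xi>" "extension r E \<xi> \<gamma>0" "Ffree F V E \<gamma>0"
    and gluing: "\<And>(VH :: nat set) EH \<gamma>H fH \<gamma> (g :: nat \<Rightarrow> nat) (h :: nat \<Rightarrow> nat).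
      graph VH EH \<Longrightarrow> coloring r EH \<gamma>H \<Longrightarrow> Ffree F VH EH \<gamma>H \<Longrightarrow> fH \<in> EH \<Longrightarrow>
      extension r E \<xi> \<gamma> \<Longrightarrow> Ffree F V E \<gamma> \<Longrightarrow> \<gamma> e = \<gamma>H fH \<Longrightarrow>
      inj_on g V \<Longrightarrow> inj_on h VH \<Longrightarrow> g ` V \<inter> h ` VH = g ` e \<Longrightarrow> g ` e = h ` fH \<Longrightarrow>
      \<exists>\<gamma>K. glued_free_extension r F V E \<xi> VH EH \<gamma>H g h \<gamma>K"
  shows "safe r F V E \<xi> [e]"
  unfolding safe_def
proof (intro conjI allI impI)
  fix VH :: "nat set" and EH \<gamma>H fs VK EK and g h :: "nat \<Rightarrow> nat"
  assume H: "graph VH EH \<and> coloring r EH \<gamma>H \<and> Ffree F VH EH \<gamma>H \<and>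
      length fs = length [e] \<and> set fs \<subseteq> EH \<and> distinct fs \<and> pairwise_disj_list fs \<and>
      (\<exists>\<gamma>. extension r E \<xi> \<gamma> \<and> Ffree F V E \<gamma> \<and> (\<forall>j<length [e]. \<gamma> ([e] ! j) = \<gamma>H (fs ! j)))"
    and gl: "glued V E VH EH [e] fs VK EK g h"
  from H have "length fs = Suc 0" by (elim conjE) simp
  then obtain fH where fs: "fs = [fH]" by (cases fs) auto
  from H obtain \<gamma> where \<gamma>: "extension r E \<xi> \<gamma>" "Ffree F V E \<gamma>"
      and \<gamma>_fs: "\<forall>j<length [e]. \<gamma> ([e] ! j) = \<gamma>H (fs ! j)" by (elim conjE exE)
  have \<gamma>_e: "\<gamma> e = \<gamma>H fH" using \<gamma>_fs[rule_format, of 0] fs by simp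
  from gl have K: "inj_on g V" "inj_on h VH" "VK = g ` V \<union> h ` VH"
      "EK = (\<lambda>e. g ` e) ` E \<union> (\<lambda>f. h ` f) ` EH" "g ` V \<inter> h ` VH = g ` e" "g ` e = h ` fH"
    unfolding fs glued_single_iff by simp_all
  have H': "graph VH EH" "coloring r EH \<gamma>H" "Ffree F VH EH \<gamma>H" "fH \<in> EH"
    using H fs by simp_all
  obtain \<gamma>K where "glued_free_extension r F V E \<xi> VH EH \<gamma>H g h \<gamma>K"
    using gluing[OF H' \<gamma> \<gamma>_e K(1,2,5,6)] by (elim exE)
  then show "\<exists>\<gamma>K. coloring r EK \<gamma>K \<and> Ffree F VK EK \<gamma>K \<and>
      (\<forall>e\<in>dom \<xi>. \<xi> e = Some (\<gamma>K (g ` e))) \<and> (\<forall>f\<in>EH. \<gamma>K (h ` f) = \<gamma>H f)"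
    unfolding glued_free_extension_def K(3,4) by (intro exI)
qed (use assms in \<open>auto simp: pairwise_disj_list_def\<close>)

definition safe_forcer :: "nat \<Rightarrow> ('a set \<times> 'a set set \<times> ('a set \<Rightarrow> nat)) set \<Rightarrow> nat
    \<Rightarrow> nat set \<Rightarrow> nat set set \<Rightarrow> (nat set \<rightharpoonup> nat) \<Rightarrow> nat set \<Rightarrow> bool" where
  "safe_forcer r F i V E \<xi> e \<longleftrightarrow> graph V E \<and> pcoloring r E \<xi> \<and> e \<in> E \<and> e \<notin> dom \<xi> \<and>
     (\<forall>\<gamma>. extension r E \<xi> \<gamma> \<and> Ffree F V E \<gamma> \<longrightarrow> \<gamma> e = i) \<and> safe r F V E \<xi> [e]"

lemma safe_forcerD:
  assumes "safe_forcer r F i V E \<xi> e"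
  shows "graph V E" "pcoloring r E \<xi>" "e \<in> E" "e \<notin> dom \<xi>"
    "\<And>\<gamma>. extension r E \<xi> \<gamma> \<Longrightarrow> Ffree F V E \<gamma> \<Longrightarrow> \<gamma> e = i" "safe r F V E \<xi> [e]"
  using assms unfolding safe_forcer_def by simp_all

lemma safe_free_extension:
  assumes "safe r F V E \<xi> es"
  obtains \<gamma> where "extension r E \<xi> \<gamma>" "Ffree F V E \<gamma>"
  using assms unfolding safe_def by (elim conjE exE)

lemma determiner_safe_iff:
  "determiner r F V E \<xi> e i \<and> safe r F V E \<xi> [e] \<longleftrightarrow>
     safe_forcer r F i V E \<xi> e \<and> (\<exists>x\<in>e. \<forall>f\<in>dom \<xi>. x \<notin> f)"
proof -
  have "safe r F V E \<xi> [e] \<Longrightarrow> \<exists>\<gamma>. extension r E \<xi> \<gamma> \<and> Ffree F V E \<gamma>"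
    by (elim safe_free_extension) blast
  then show ?thesis unfolding determiner_def safe_forcer_def by meson
qed

lemma pcoloring_dom: "pcoloring r E \<xi> \<Longrightarrow> f \<in> dom \<xi> \<Longrightarrow> f \<in> E"
  unfolding pcoloring_def by blast

lemma safe_forcer_glue:
  fixes W :: "nat set" and k :: "nat \<Rightarrow> nat"
  assumes "safe_forcer r F c VD ED \<xi>D eD" "graph W EW" "coloring r EW \<gamma>W" "Ffree F W EW \<gamma>W"
    "fW \<in> EW" "\<gamma>W fW = c" "inj_on k VD" "k ` VD \<inter> W = k ` eD" "k ` eD = fW"
  obtains \<gamma>K where "coloring r (EW \<union> (\<lambda>e. k ` e) ` ED) \<gamma>K"
    "Ffree F (W \<union> k ` VD) (EW \<union> (\<lambda>e. k ` e) ` ED) \<gamma>K"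
    "\<forall>e\<in>dom \<xi>D. \<xi>D e = Some (\<gamma>K (k ` e))" "\<forall>f\<in>EW. \<gamma>K f = \<gamma>W f"
proof -
  note D = safe_forcerD[OF assms(1)]
  obtain \<gamma>D where \<gamma>D: "extension r ED \<xi>D \<gamma>D" "Ffree F VD ED \<gamma>D"
    using safe_free_extension[OF D(6)] .
  have "\<gamma>D eD = \<gamma>W fW" using D(5)[OF \<gamma>D] assms(6) by simp
  moreover have "k ` VD \<inter> id ` W = k ` eD" "k ` eD = id ` fW" using assms(8,9) by simp_all
  ultimately obtain \<gamma>K where "glued_free_extension r F VD ED \<xi>D W EW \<gamma>W k id \<gamma>K"
    using safe_singleD[OF D(6) assms(2-5) \<gamma>D _ assms(7) inj_on_id] by blast
  then have "coloring r (EW \<union> (\<lambda>e. k ` e) ` ED) \<gamma>K \<and> Ffree F (W \<union> k ` VD) (EW \<union> (\<lambda>e. k ` e) ` ED) \<gamma>K \<and>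
      (\<forall>e\<in>dom \<xi>D. \<xi>D e = Some (\<gamma>K (k ` e))) \<and> (\<forall>f\<in>EW. \<gamma>K f = \<gamma>W f)"
    unfolding glued_free_extension_def by (simp add: Un_commute)
  with that show thesis by blast
qed

definition substitute_pcoloring :: "('w \<Rightarrow> 'v) \<Rightarrow> 'v set set \<Rightarrow> ('v set \<rightharpoonup> nat) \<Rightarrow> 'v set
    \<Rightarrow> 'w set set \<Rightarrow> 'w set \<Rightarrow> ('w set \<rightharpoonup> nat) \<Rightarrow> 'v set \<rightharpoonup> nat" where
  "substitute_pcoloring g E \<xi> f ED VD \<xi>D e' =
     (if e' \<in> E then (if e' = f then None else \<xi> e')
      else if e' \<in> (\<lambda>e. g ` e) ` ED then \<xi>D (VD \<inter> g -` e') else None)"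

locale edge_substitution =
  fixes r :: nat and F :: "('a set \<times> 'a set set \<times> ('a set \<Rightarrow> nat)) set" and i c :: nat
    and V :: "nat set" and E \<xi> e f and VD :: "nat set" and ED \<xi>D eD and g :: "nat \<Rightarrow> nat"
  assumes host: "safe_forcer r F i V E \<xi> e"
    and f_color: "\<xi> f = Some c"
    and gadget: "safe_forcer r F c VD ED \<xi>D eD"
    and g_inj: "inj_on g VD"
    and g_meets_host: "\<And>x. x \<in> VD \<Longrightarrow> g x \<in> V \<longleftrightarrow> x \<in> eD"
    and g_edge: "g ` eD = f"
begin

abbreviation "V1 \<equiv> V \<union> g ` VD"
abbreviation "E1 \<equiv> E \<union> (\<lambda>e. g ` e) ` ED"
abbreviation "\<xi>1 \<equiv> substitute_pcoloring g E \<xi> f ED VD \<xi>D"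

lemmas host_graph = safe_forcerD(1)[OF host]
  and host_pcoloring = safe_forcerD(2)[OF host]
  and host_forced = safe_forcerD(5)[OF host]
  and host_safe = safe_forcerD(6)[OF host]
  and gadget_graph = safe_forcerD(1)[OF gadget]
  and gadget_pcoloring = safe_forcerD(2)[OF gadget]
  and gadget_forced = safe_forcerD(5)[OF gadget]

lemma f_in_E: "f \<in> E"
  using pcoloring_dom[OF host_pcoloring] f_color by blast

lemma eD_subset: "eD \<subseteq> VD"
  using gadget_graph safe_forcerD(3)[OF gadget] unfolding graph_def by blast

lemma image_meets_host: "g ` VD \<inter> V = f"
  using g_meets_host eD_subset g_edge by blast

lemma gadget_edge_image_notin_E:
  assumes "e' \<in> ED" "e' \<noteq> eD"
  shows "g ` e' \<notin> E"
proof
  assume "g ` e' \<in> E"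
  then have "g ` e' \<subseteq> V" using host_graph unfolding graph_def by blast
  moreover have "e' \<subseteq> VD" using gadget_graph assms(1) unfolding graph_def by blast
  ultimately have "e' \<subseteq> eD" using g_meets_host by blast
  then show False
    using graph_edge_subset_eq[OF gadget_graph safe_forcerD(3)[OF gadget] assms(1)] assms(2) by blast
qed

lemma \<xi>1_host: "e' \<in> E \<Longrightarrow> \<xi>1 e' = (if e' = f then None else \<xi> e')"
  unfolding substitute_pcoloring_def by simp

lemma \<xi>1_gadget:
  assumes "e' \<in> ED" "e' \<noteq> eD"
  shows "\<xi>1 (g ` e') = \<xi>D e'"
proof -
  have "e' \<subseteq> VD" using gadget_graph assms(1) unfolding graph_def by blast
  then have "VD \<inter> g -` g ` e' = e'" using g_inj unfolding inj_on_def by blast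
  then show ?thesis
    using gadget_edge_image_notin_E[OF assms] assms(1) unfolding substitute_pcoloring_def by simp
qed

lemma gadget_dom: "e' \<in> dom \<xi>D \<Longrightarrow> e' \<in> ED \<and> e' \<noteq> eD"
  using pcoloring_dom[OF gadget_pcoloring] safe_forcerD(4)[OF gadget] by blast

lemma \<xi>1_old: "e' \<in> dom \<xi> - {f} \<Longrightarrow> \<xi>1 e' = \<xi> e'"
  using \<xi>1_host pcoloring_dom[OF host_pcoloring] by simp

lemma \<xi>1_new: "e' \<in> dom \<xi>D \<Longrightarrow> \<xi>1 (g ` e') = \<xi>D e'"
  using \<xi>1_gadget gadget_dom by blast

lemma dom_\<xi>1: "dom \<xi>1 = (dom \<xi> - {f}) \<union> (\<lambda>e. g ` e) ` dom \<xi>D"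
proof (intro equalityI subsetI)
  fix e' assume e': "e' \<in> dom \<xi>1"
  show "e' \<in> (dom \<xi> - {f}) \<union> (\<lambda>e. g ` e) ` dom \<xi>D"
  proof (cases "e' \<in> E")
    case True
    then show ?thesis using e' \<xi>1_host[OF True] by (auto split: if_splits)
  next
    case False
    with e' obtain e'' where e'': "e'' \<in> ED" "e' = g ` e''"
      unfolding substitute_pcoloring_def by (auto split: if_splits)
    have "e'' \<noteq> eD" using False e'' g_edge f_in_E by blast
    then have "\<xi>1 e' = \<xi>D e''" using \<xi>1_gadget e'' by blast
    then show ?thesis using e' e'' by (simp add: domIff)
  qed
next
  fix e' assume "e' \<in> (dom \<xi> - {f}) \<union> (\<lambda>e. g ` e) ` dom \<xi>D"
  then show "e' \<in> dom \<xi>1"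
  proof
    assume old: "e' \<in> dom \<xi> - {f}"
    with \<xi>1_old[OF old] show ?thesis by (simp add: domIff)
  next
    assume "e' \<in> (\<lambda>e. g ` e) ` dom \<xi>D"
    then obtain e'' where "e'' \<in> dom \<xi>D" "e' = g ` e''" by blast
    with \<xi>1_new show ?thesis by (simp add: domIff)
  qed
qed

lemma agrees_\<xi>1_iff:
  "(\<forall>e'\<in>dom \<xi>1. \<xi>1 e' = Some (\<psi> e')) \<longleftrightarrow>
     (\<forall>e'\<in>dom \<xi> - {f}. \<xi> e' = Some (\<psi> e')) \<and> (\<forall>e'\<in>dom \<xi>D. \<xi>D e' = Some (\<psi> (g ` e')))"
  unfolding dom_\<xi>1 ball_Un
proof (intro arg_cong2[where f = "(\<and>)"])
  show "(\<forall>e'\<in>dom \<xi> - {f}. \<xi>1 e' = Some (\<psi> e')) = (\<forall>e'\<in>dom \<xi> - {f}. \<xi> e' = Some (\<psi> e'))"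
    using \<xi>1_old by (intro ball_cong) simp_all
  show "(\<forall>e'\<in>(\<lambda>e. g ` e) ` dom \<xi>D. \<xi>1 e' = Some (\<psi> e')) =
      (\<forall>e'\<in>dom \<xi>D. \<xi>D e' = Some (\<psi> (g ` e')))"
    by (auto simp: \<xi>1_new)
qed

lemma extension_\<xi>1_iff:
  "extension r E1 \<xi>1 \<gamma> \<longleftrightarrow> coloring r E1 \<gamma> \<and>
     (\<forall>e'\<in>dom \<xi> - {f}. \<xi> e' = Some (\<gamma> e')) \<and> (\<forall>e'\<in>dom \<xi>D. \<xi>D e' = Some (\<gamma> (g ` e')))"
  unfolding extension_def agrees_\<xi>1_iff ..

lemma graph_V1: "graph V1 E1"
  using graph_glued[OF host_graph gadget_graph inj_on_id g_inj] by simp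

lemma pcoloring_\<xi>1: "pcoloring r E1 \<xi>1"
  unfolding pcoloring_def
proof
  show "dom \<xi>1 \<subseteq> E1"
    unfolding dom_\<xi>1 using pcoloring_dom[OF host_pcoloring] pcoloring_dom[OF gadget_pcoloring] by blast
  have "ran \<xi>1 \<subseteq> ran \<xi> \<union> ran \<xi>D"
  proof
    fix y assume "y \<in> ran \<xi>1"
    then obtain e' where e': "\<xi>1 e' = Some y" by (auto simp: ran_def)
    then have "e' \<in> dom \<xi>1" by blast
    then consider "e' \<in> dom \<xi> - {f}" | e'' where "e'' \<in> dom \<xi>D" "e' = g ` e''"
      unfolding dom_\<xi>1 by blast
    then show "y \<in> ran \<xi> \<union> ran \<xi>D"
    proof cases
      case 1
      then show ?thesis using e' \<xi>1_old by (simp add: ranI)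
    next
      case 2
      then show ?thesis using e' \<xi>1_new by (simp add: ranI)
    qed
  qed
  then show "ran \<xi>1 \<subseteq> {1..r}"
    using host_pcoloring gadget_pcoloring unfolding pcoloring_def by blast
qed

lemma e_in_E1: "e \<in> E1"
  using safe_forcerD(3)[OF host] by blast

lemma e_notin_dom_\<xi>1: "e \<notin> dom \<xi>1"
proof
  assume "e \<in> dom \<xi>1"
  moreover have "e \<notin> dom \<xi>" using safe_forcerD(4)[OF host] .
  ultimately obtain e'' where "e'' \<in> dom \<xi>D" "e = g ` e''" unfolding dom_\<xi>1 by blast
  then show False
    using gadget_edge_image_notin_E gadget_dom safe_forcerD(3)[OF host] by blast
qed

lemma extension_\<xi>1_restrict:
  assumes "extension r E1 \<xi>1 \<gamma>" "Ffree F V1 E1 \<gamma>"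
  shows "extension r E \<xi> \<gamma>" "Ffree F V E \<gamma>"
proof -
  show "Ffree F V E \<gamma>" using Ffree_subgraph[OF assms(2)] by blast
  have col: "coloring r E1 \<gamma>" and old: "\<forall>e'\<in>dom \<xi> - {f}. \<xi> e' = Some (\<gamma> e')"
    and new: "\<forall>e'\<in>dom \<xi>D. \<xi>D e' = Some (\<gamma> (g ` e'))"
    using assms(1) unfolding extension_\<xi>1_iff by blast+
  have "extension r ED \<xi>D (\<lambda>e'. \<gamma> (g ` e'))"
    using col new unfolding extension_def coloring_def by blast
  moreover have "Ffree F VD ED (\<lambda>e'. \<gamma> (g ` e'))" by (rule Ffree_pullback[OF assms(2)]) auto
  ultimately have "\<gamma> f = c" using gadget_forced g_edge by blast
  with col old f_color show "extension r E \<xi> \<gamma>"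
    unfolding extension_def coloring_def by (metis DiffI Un_iff singletonD)
qed

lemma host_extension_extends:
  assumes "extension r E \<xi> \<gamma>" "Ffree F V E \<gamma>"
  obtains \<gamma>1 where "extension r E1 \<xi>1 \<gamma>1" "Ffree F V1 E1 \<gamma>1"
proof -
  have col: "coloring r E \<gamma>" and agree: "\<forall>e'\<in>dom \<xi>. \<xi> e' = Some (\<gamma> e')"
    using assms(1) unfolding extension_def by blast+
  then have "\<gamma> f = c" using f_color by (metis domI option.inject)
  moreover have "g ` VD \<inter> V = g ` eD" using image_meets_host g_edge by simp
  ultimately obtain \<gamma>K where K: "coloring r E1 \<gamma>K" "Ffree F V1 E1 \<gamma>K"
      "\<forall>e'\<in>dom \<xi>D. \<xi>D e' = Some (\<gamma>K (g ` e'))" "\<forall>e'\<in>E. \<gamma>K e' = \<gamma> e'"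
    using safe_forcer_glue[OF gadget host_graph col assms(2) f_in_E _ g_inj _ g_edge] by blast
  have "extension r E1 \<xi>1 \<gamma>K"
    unfolding extension_\<xi>1_iff using K(1,3,4) agree pcoloring_dom[OF host_pcoloring] by simp
  then show thesis using K(2) by (rule that)
qed

lemma gadget_image_meets_glued:
  assumes "inj_on g1 V1" "g1 ` V1 \<inter> h1 ` VH = g1 ` e"
  shows "(g1 \<circ> g) ` VD \<inter> (g1 ` V \<union> h1 ` VH) = (g1 \<circ> g) ` eD"
proof -
  have "e \<subseteq> V" using host_graph safe_forcerD(3)[OF host] unfolding graph_def by blast
  have "g1 ` V1 \<inter> (g1 ` V \<union> h1 ` VH) = g1 ` V \<union> g1 ` e"
    unfolding Int_Un_distrib assms(2) by auto
  with \<open>e \<subseteq> V\<close> have glued_part: "g1 ` V1 \<inter> (g1 ` V \<union> h1 ` VH) = g1 ` V" by auto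
  have "(g1 \<circ> g) ` VD \<inter> (g1 ` V \<union> h1 ` VH) = g1 ` (g ` VD) \<inter> (g1 ` V1 \<inter> (g1 ` V \<union> h1 ` VH))"
    by (auto simp: image_comp)
  also have "\<dots> = g1 ` (g ` VD) \<inter> g1 ` V" unfolding glued_part ..
  also have "\<dots> = g1 ` (g ` VD \<inter> V)" by (rule inj_on_image_Int[OF assms(1), symmetric]) auto
  also have "\<dots> = (g1 \<circ> g) ` eD" unfolding image_meets_host g_edge[symmetric] by (rule image_comp)
  finally show ?thesis .
qed

lemma glued_extension_lift:
  fixes VH :: "nat set" and g1 h1 :: "nat \<Rightarrow> nat"
  assumes "graph VH EH" "inj_on g1 V1" "inj_on h1 VH" "g1 ` V1 \<inter> h1 ` VH = g1 ` e"
    and "glued_free_extension r F V E \<xi> VH EH \<gamma>H g1 h1 \<gamma>0"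
  obtains \<gamma>K where "glued_free_extension r F V1 E1 \<xi>1 VH EH \<gamma>H g1 h1 \<gamma>K"
proof -
  define W where "W = g1 ` V \<union> h1 ` VH"
  define EW where "EW = (\<lambda>e. g1 ` e) ` E \<union> (\<lambda>f. h1 ` f) ` EH"
  have "inj_on g1 V" using inj_on_subset[OF assms(2)] by blast
  then have W: "graph W EW" unfolding W_def EW_def by (rule graph_glued[OF host_graph assms(1) _ assms(3)])
  have \<gamma>0: "coloring r EW \<gamma>0" "Ffree F W EW \<gamma>0" "\<forall>e'\<in>dom \<xi>. \<xi> e' = Some (\<gamma>0 (g1 ` e'))"
      "\<forall>f'\<in>EH. \<gamma>0 (h1 ` f') = \<gamma>H f'"
    using assms(5) unfolding glued_free_extension_def W_def EW_def by blast+
  have f_EW: "g1 ` f \<in> EW" using f_in_E unfolding EW_def by blast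
  have "\<gamma>0 (g1 ` f) = c" using \<gamma>0(3) f_color by (metis domI option.inject)
  moreover have "inj_on (g1 \<circ> g) VD"
    using comp_inj_on[OF g_inj] inj_on_subset[OF assms(2)] by blast
  moreover have "(g1 \<circ> g) ` eD = g1 ` f" using g_edge by (metis image_comp)
  ultimately obtain \<gamma>K where K: "coloring r (EW \<union> (\<lambda>e. (g1 \<circ> g) ` e) ` ED) \<gamma>K"
      "Ffree F (W \<union> (g1 \<circ> g) ` VD) (EW \<union> (\<lambda>e. (g1 \<circ> g) ` e) ` ED) \<gamma>K"
      "\<forall>e'\<in>dom \<xi>D. \<xi>D e' = Some (\<gamma>K ((g1 \<circ> g) ` e'))" "\<forall>f'\<in>EW. \<gamma>K f' = \<gamma>0 f'"
    using safe_forcer_glue[OF gadget W \<gamma>0(1,2) f_EW _ _ gadget_image_meets_glued[OF assms(2,4), folded W_def]]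
    by blast
  have VK: "W \<union> (g1 \<circ> g) ` VD = g1 ` V1 \<union> h1 ` VH"
    unfolding W_def by (auto simp: image_comp)
  have EK: "EW \<union> (\<lambda>e. (g1 \<circ> g) ` e) ` ED = (\<lambda>e. g1 ` e) ` E1 \<union> (\<lambda>f. h1 ` f) ` EH"
    unfolding EW_def by (auto simp: image_comp)
  have "\<forall>e'\<in>dom \<xi>1. \<xi>1 e' = Some (\<gamma>K (g1 ` e'))"
    unfolding agrees_\<xi>1_iff using \<gamma>0(3) K(3,4) pcoloring_dom[OF host_pcoloring]
    unfolding EW_def by (simp add: image_comp)
  moreover have "\<forall>f'\<in>EH. \<gamma>K (h1 ` f') = \<gamma>H f'" using K(4) \<gamma>0(4) unfolding EW_def by simp
  ultimately have "glued_free_extension r F V1 E1 \<xi>1 VH EH \<gamma>H g1 h1 \<gamma>K"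
    unfolding glued_free_extension_def
  proof (intro conjI)
    show "coloring r ((\<lambda>e. g1 ` e) ` E1 \<union> (\<lambda>f. h1 ` f) ` EH) \<gamma>K" using K(1) unfolding EK .
    show "Ffree F (g1 ` V1 \<union> h1 ` VH) ((\<lambda>e. g1 ` e) ` E1 \<union> (\<lambda>f. h1 ` f) ` EH) \<gamma>K"
      using K(2) unfolding EK VK .
  qed
  then show thesis by (rule that)
qed

lemma safe_\<xi>1: "safe r F V1 E1 \<xi>1 [e]"
proof -
  obtain \<gamma>0 where "extension r E \<xi> \<gamma>0" "Ffree F V E \<gamma>0" using safe_free_extension[OF host_safe] .
  then obtain \<gamma>1 where \<gamma>1: "extension r E1 \<xi>1 \<gamma>1" "Ffree F V1 E1 \<gamma>1" by (rule host_extension_extends)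
  show ?thesis
  proof (rule safe_singleI[OF e_in_E1 e_notin_dom_\<xi>1 \<gamma>1])
    fix VH :: "nat set" and EH \<gamma>H fH \<gamma> and g1 h1 :: "nat \<Rightarrow> nat"
    assume H: "graph VH EH" "coloring r EH \<gamma>H" "Ffree F VH EH \<gamma>H" "fH \<in> EH"
      and \<gamma>: "extension r E1 \<xi>1 \<gamma>" "Ffree F V1 E1 \<gamma>" "\<gamma> e = \<gamma>H fH"
      and emb: "inj_on g1 V1" "inj_on h1 VH" "g1 ` V1 \<inter> h1 ` VH = g1 ` e" "g1 ` e = h1 ` fH"
    have "inj_on g1 V" using inj_on_subset[OF emb(1)] by blast
    moreover have "g1 ` V \<inter> h1 ` VH = g1 ` e"
    proof -
      have "e \<subseteq> V" using host_graph safe_forcerD(3)[OF host] unfolding graph_def by blast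
      moreover have "fH \<subseteq> VH" using H(1,4) unfolding graph_def by blast
      ultimately show ?thesis using emb(3,4) by blast
    qed
    ultimately obtain \<gamma>0 where "glued_free_extension r F V E \<xi> VH EH \<gamma>H g1 h1 \<gamma>0"
      using safe_singleD[OF host_safe H extension_\<xi>1_restrict[OF \<gamma>(1,2)] \<gamma>(3) _ emb(2) _ emb(4)]
      by blast
    then obtain \<gamma>K where "glued_free_extension r F V1 E1 \<xi>1 VH EH \<gamma>H g1 h1 \<gamma>K"
      by (rule glued_extension_lift[OF H(1) emb(1-3)])
    then show "\<exists>\<gamma>K. glued_free_extension r F V1 E1 \<xi>1 VH EH \<gamma>H g1 h1 \<gamma>K" by blast
  qed
qed

theorem safe_forcer_\<xi>1: "safe_forcer r F i V1 E1 \<xi>1 e"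
  unfolding safe_forcer_def
proof (intro conjI allI impI graph_V1 pcoloring_\<xi>1 e_in_E1 e_notin_dom_\<xi>1 safe_\<xi>1)
  fix \<gamma> assume "extension r E1 \<xi>1 \<gamma> \<and> Ffree F V1 E1 \<gamma>"
  then have "extension r E \<xi> \<gamma>" "Ffree F V E \<gamma>" using extension_\<xi>1_restrict by blast+
  then show "\<gamma> e = i" by (rule host_forced)
qed

end

lemma fresh_embedding:
  fixes V :: "nat set"
  assumes "finite V" "a \<in> V" "b \<in> V" "a \<noteq> b" "p \<noteq> q"
  obtains g :: "nat \<Rightarrow> nat" where "inj g" "g p = a" "g q = b" "\<And>x. g x \<in> V \<longleftrightarrow> x = p \<or> x = q"
proof -
  define N where "N = Suc (Max V)"
  have below: "x < N" if "x \<in> V" for x using Max_ge[OF assms(1) that] unfolding N_def by simp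
  define g where "g x = (if x = p then a else if x = q then b else N + x)" for x
  have "inj g" unfolding inj_def g_def using below[OF assms(2)] below[OF assms(3)] assms(4,5) by auto
  moreover have "g x \<in> V \<longleftrightarrow> x = p \<or> x = q" for x
    unfolding g_def using below[of "N + x"] assms(2,3) by auto
  ultimately show thesis using that assms(5) unfolding g_def by simp
qed

lemma safe_forcer_substitute:
  assumes host: "safe_forcer r F i V E \<xi> e" and f: "\<xi> f = Some c" "f = {a, b}" "a \<noteq> b"
    and gadget: "safe_forcer r F c VD ED \<xi>D {p, q}" "p \<noteq> q"
  obtains g :: "nat \<Rightarrow> nat" where
    "safe_forcer r F i (V \<union> g ` VD) (E \<union> (\<lambda>e. g ` e) ` ED) (substitute_pcoloring g E \<xi> f ED VD \<xi>D) e"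
    "dom (substitute_pcoloring g E \<xi> f ED VD \<xi>D) = (dom \<xi> - {f}) \<union> (\<lambda>e. g ` e) ` dom \<xi>D"
    "g p = a" "g q = b" "\<And>x. g x \<in> V \<longleftrightarrow> x = p \<or> x = q"
proof -
  have "f \<in> E" using pcoloring_dom[OF safe_forcerD(2)[OF host]] f(1) by blast
  then have "a \<in> V" "b \<in> V" "finite V" using safe_forcerD(1)[OF host] f(2) unfolding graph_def by auto
  then obtain g :: "nat \<Rightarrow> nat" where g: "inj g" "g p = a" "g q = b" "\<And>x. g x \<in> V \<longleftrightarrow> x = p \<or> x = q"
    using fresh_embedding f(3) gadget(2) by metis
  interpret edge_substitution r F i c V E \<xi> e f VD ED \<xi>D "{p, q}" g
  proof
    show "inj_on g VD" using g(1) inj_on_subset by blast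
    show "g ` {p, q} = f" using g(2,3) f(2) by simp
  qed (use host f(1) gadget(1) g(4) in auto)
  show thesis using that[OF safe_forcer_\<xi>1 dom_\<xi>1 g(2-4)] .
qed

lemma finite_shrink_invariant:
  assumes "finite S" "P V E \<xi> S"
    and step: "\<And>V E \<xi> S f. P V E \<xi> S \<Longrightarrow> f \<in> S \<Longrightarrow> \<exists>V' E' \<xi>'. P V' E' \<xi>' (S - {f})"
  shows "\<exists>V E \<xi>. P V E \<xi> {}"
  using assms(1,2)
proof (induction S arbitrary: V E \<xi> rule: finite_induct)
  case (insert f S)
  then obtain V' E' \<xi>' where "P V' E' \<xi>' (insert f S - {f})" using step by blast
  with insert.hyps(2) insert.IH show ?case by simp
qed blast

lemma safe_forcer_finite_dom: "safe_forcer r F i V E \<xi> e \<Longrightarrow> finite (dom \<xi>)"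
  using graph_finite_edges[OF safe_forcerD(1)] pcoloring_dom[OF safe_forcerD(2)] by (meson finite_subset subsetI)

lemma safe_forcer_color:
  assumes "safe_forcer r F i V E \<xi> e" "\<xi> f = Some c"
  shows "c \<in> {1..r}"
  using safe_forcerD(2)[OF assms(1)] assms(2) unfolding pcoloring_def by (auto intro: ranI)

lemma safe_forcer_detach_edge:
  assumes gadgets: "\<forall>c\<in>{1..r}.
      \<exists>(VD :: nat set) ED \<xi>D eD. safe_forcer r F c VD ED \<xi>D eD \<and> (\<exists>p\<in>eD. \<forall>f'\<in>dom \<xi>D. p \<notin> f')"
    and host: "safe_forcer r F i V E \<xi> e" and "\<xi> f = Some c"
  shows "\<exists>V' E' \<xi>'. safe_forcer r F i V' E' \<xi>' e \<and> (\<forall>f'\<in>dom \<xi>'. f' \<in> dom \<xi> - {f} \<or> disjnt f' e)"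
proof -
  obtain VD ED \<xi>D eD p where gadget: "safe_forcer r F c VD ED \<xi>D eD"
    and p: "p \<in> eD" "\<forall>f'\<in>dom \<xi>D. p \<notin> f'"
    using gadgets safe_forcer_color[OF host assms(3)] by blast
  obtain q where q: "eD = {p, q}" "p \<noteq> q"
    using graph_edge_other_end[OF safe_forcerD(1,3)[OF gadget] p(1)] .
  have "f \<in> E" "f \<noteq> e"
    using pcoloring_dom[OF safe_forcerD(2)[OF host]] safe_forcerD(4)[OF host] assms(3) by auto
  then obtain a b where ab: "f = {a, b}" "a \<noteq> b" "b \<notin> e"
    using graph_edge_leaving[OF safe_forcerD(1)[OF host] _ safe_forcerD(3)[OF host]] by blast
  have "e \<subseteq> V" using safe_forcerD(1,3)[OF host] unfolding graph_def by blast
  obtain g :: "nat \<Rightarrow> nat" where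
    sub: "safe_forcer r F i (V \<union> g ` VD) (E \<union> (\<lambda>e. g ` e) ` ED) (substitute_pcoloring g E \<xi> f ED VD \<xi>D) e"
    and dom: "dom (substitute_pcoloring g E \<xi> f ED VD \<xi>D) = (dom \<xi> - {f}) \<union> (\<lambda>e. g ` e) ` dom \<xi>D"
    and g: "g q = b" "\<And>x. g x \<in> V \<longleftrightarrow> x = p \<or> x = q"
    using safe_forcer_substitute[OF host assms(3) ab(1,2) gadget[unfolded q(1)] q(2)] by metis
  have new: "disjnt (g ` f') e" if "f' \<in> dom \<xi>D" for f'
  proof -
    have "g x \<notin> e" if "x \<in> f'" for x
    proof (cases "x = q")
      case True
      with g(1) ab(3) show ?thesis by simp
    next
      case False
      moreover have "x \<noteq> p" using p(2) \<open>f' \<in> dom \<xi>D\<close> that by blast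
      ultimately show ?thesis using g(2) \<open>e \<subseteq> V\<close> by blast
    qed
    then show ?thesis unfolding disjnt_def by blast
  qed
  show ?thesis
  proof (intro exI conjI ballI)
    fix f' assume "f' \<in> dom (substitute_pcoloring g E \<xi> f ED VD \<xi>D)"
    then show "f' \<in> dom \<xi> - {f} \<or> disjnt f' e" unfolding dom using new by blast
  qed (rule sub)
qed

lemma safe_forcer_isolate:
  assumes gadgets: "\<forall>c\<in>{1..r}.
      \<exists>(VD :: nat set) ED \<xi>D eD. safe_forcer r F c VD ED \<xi>D eD \<and> (\<exists>p\<in>eD. \<forall>f'\<in>dom \<xi>D. p \<notin> f')"
    and host: "safe_forcer r F i V E \<xi> e"
  shows "\<exists>V' E' \<xi>'. safe_forcer r F i V' E' \<xi>' e \<and> (\<forall>f\<in>dom \<xi>'. disjnt f e)"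
proof -
  define P where "P V E \<xi> S \<longleftrightarrow> safe_forcer r F i V E \<xi> e \<and> (\<forall>f\<in>dom \<xi> - S. disjnt f e)"
    for V E \<xi> and S :: "nat set set"
  have "\<exists>V' E' \<xi>'. P V' E' \<xi>' {}"
  proof (rule finite_shrink_invariant)
    show "finite (dom \<xi>)" by (rule safe_forcer_finite_dom[OF host])
    show "P V E \<xi> (dom \<xi>)" unfolding P_def using host by simp
  next
    fix V E \<xi> S f assume PS: "P V E \<xi> S" and "f \<in> S"
    show "\<exists>V' E' \<xi>'. P V' E' \<xi>' (S - {f})"
    proof (cases "f \<in> dom \<xi>")
      case False
      with PS show ?thesis unfolding P_def by blast
    next
      case True
      then obtain c where c: "\<xi> f = Some c" by blast
      have "safe_forcer r F i V E \<xi> e" using PS unfolding P_def by blast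
      then obtain V' E' \<xi>' where "safe_forcer r F i V' E' \<xi>' e"
          "\<forall>f'\<in>dom \<xi>'. f' \<in> dom \<xi> - {f} \<or> disjnt f' e"
        using safe_forcer_detach_edge[OF gadgets \<open>safe_forcer r F i V E \<xi> e\<close> c] by blast
      with PS have "P V' E' \<xi>' (S - {f})" unfolding P_def by blast
      then show ?thesis by blast
    qed
  qed
  then show ?thesis unfolding P_def by simp
qed

definition edge_lipschitz :: "'v set set \<Rightarrow> ('v \<Rightarrow> nat) \<Rightarrow> bool" where
  "edge_lipschitz E \<phi> \<longleftrightarrow> (\<forall>e\<in>E. \<forall>u\<in>e. \<forall>v\<in>e. \<phi> u \<le> \<phi> v + 1)"

definition distance_potential :: "nat \<Rightarrow> 'v set set \<Rightarrow> 'v set \<Rightarrow> 'v set set \<Rightarrow> ('v \<Rightarrow> nat) \<Rightarrow> bool" where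
  "distance_potential d E e S \<phi> \<longleftrightarrow> edge_lipschitz E \<phi> \<and> (\<forall>x\<in>e. \<phi> x = 0) \<and> (\<forall>f\<in>S. \<forall>x\<in>f. d \<le> \<phi> x)"

lemma edge_lipschitzD: "edge_lipschitz E \<phi> \<Longrightarrow> e \<in> E \<Longrightarrow> u \<in> e \<Longrightarrow> v \<in> e \<Longrightarrow> \<phi> u \<le> \<phi> v + 1"
  unfolding edge_lipschitz_def by blast

lemma edge_lipschitz_walk:
  assumes "edge_lipschitz E \<phi>" "walk_len E u v n"
  shows "\<phi> v \<le> \<phi> u + n"
proof -
  obtain p where p: "p ! 0 = u" "p ! n = v" "\<forall>i<n. {p ! i, p ! Suc i} \<in> E"
    using assms(2) unfolding walk_len_def by blast
  have "\<phi> (p ! i) \<le> \<phi> u + i" if "i \<le> n" for i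
    using that
  proof (induction i)
    case (Suc i)
    then have "{p ! i, p ! Suc i} \<in> E" using p(3) by simp
    then have "\<phi> (p ! Suc i) \<le> \<phi> (p ! i) + 1" by (rule edge_lipschitzD[OF assms(1)]) simp_all
    with Suc show ?case by simp
  qed (simp add: p(1))
  from this[of n] show ?thesis using p(2) by simp
qed

lemma distance_potential_remote:
  assumes "distance_potential d E e S \<phi>"
  shows "remote d E e S"
  unfolding remote_def
proof (intro ballI allI impI notI)
  fix f u v n assume "f \<in> S" "u \<in> e" "v \<in> f" "n < d" "walk_len E u v n"
  have "edge_lipschitz E \<phi>" "\<phi> u = 0" "d \<le> \<phi> v"
    using assms \<open>f \<in> S\<close> \<open>u \<in> e\<close> \<open>v \<in> f\<close> unfolding distance_potential_def by blast+
  moreover have "\<phi> v \<le> \<phi> u + n" using edge_lipschitz_walk[OF calculation(1) \<open>walk_len E u v n\<close>] .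
  ultimately show False using \<open>n < d\<close> by simp
qed

lemma distance_potential_mono:
  "distance_potential d E e S \<phi> \<Longrightarrow> d' \<le> d \<Longrightarrow> distance_potential d' E e S \<phi>"
  unfolding distance_potential_def by (meson order_trans)

lemma distance_potential_free_end:
  assumes "distance_potential (Suc d) E e S \<phi>" "x \<in> e" "f \<in> S"
  shows "x \<notin> f"
proof
  assume "x \<in> f"
  with assms have "Suc d \<le> \<phi> x" "\<phi> x = 0" unfolding distance_potential_def by blast+
  then show False by simp
qed

lemma edge_lipschitz_extend:
  assumes "edge_lipschitz E \<phi>" "{a, b} \<in> E" "\<forall>e'\<in>E. e' \<subseteq> V" "\<forall>e'\<in>E'. e' \<subseteq> insert a (insert b (- V))"
  shows "edge_lipschitz (E \<union> E') (\<lambda>x. if x \<in> V then \<phi> x else min (\<phi> a) (\<phi> b) + 1)"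
    (is "edge_lipschitz _ ?\<psi>")
proof -
  have "{a, b} \<subseteq> V" using assms(2,3) by blast
  then have ab: "a \<in> V" "b \<in> V" by simp_all
  have "\<forall>u\<in>{a, b}. \<forall>v\<in>{a, b}. \<phi> u \<le> \<phi> v + 1"
    using assms(1,2) unfolding edge_lipschitz_def by (rule bspec)
  then have close: "\<phi> a \<le> \<phi> b + 1" "\<phi> b \<le> \<phi> a + 1" by simp_all
  have val: "?\<psi> u \<in> {\<phi> a, \<phi> b, min (\<phi> a) (\<phi> b) + 1}" if "u \<in> insert a (insert b (- V))" for u
    using that ab by auto
  have new: "?\<psi> u \<le> ?\<psi> v + 1"
    if "u \<in> insert a (insert b (- V))" "v \<in> insert a (insert b (- V))" for u v
    using val[OF that(1)] val[OF that(2)] close by (auto simp: min_def)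
  have old: "?\<psi> u \<le> ?\<psi> v + 1" if "e' \<in> E" "u \<in> e'" "v \<in> e'" for e' u v
  proof -
    have "u \<in> V" "v \<in> V" using assms(3) that by blast+
    moreover have "\<phi> u \<le> \<phi> v + 1" using edge_lipschitzD[OF assms(1) that] .
    ultimately show ?thesis by simp
  qed
  show ?thesis unfolding edge_lipschitz_def
  proof (intro ballI)
    fix e' u v assume e': "e' \<in> E \<union> E'" and uv: "u \<in> e'" "v \<in> e'"
    show "?\<psi> u \<le> ?\<psi> v + 1"
    proof (cases "e' \<in> E")
      case True
      then show ?thesis using old uv by blast
    next
      case False
      with e' assms(4) have "e' \<subseteq> insert a (insert b (- V))" by blast
      with uv show ?thesis by (intro new) auto
    qed
  qed
qed

lemma distance_potential_substitute:
  assumes pot: "distance_potential d E e S \<phi>" and f: "{a, b} \<in> S" and "S \<subseteq> E" "e \<in> E"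
    and E_V: "\<forall>e'\<in>E. e' \<subseteq> V" and "\<forall>e'\<in>E'. e' \<subseteq> insert a (insert b (- V))"
    and S': "\<forall>f'\<in>S'. disjnt f' V"
  defines "\<psi> \<equiv> \<lambda>x. if x \<in> V then \<phi> x else min (\<phi> a) (\<phi> b) + 1"
  shows "distance_potential d (E \<union> E') e (S - {{a, b}} \<union> S') \<psi>"
    and "\<forall>f'\<in>S'. \<forall>x\<in>f'. Suc d \<le> \<psi> x"
proof -
  have old: "\<forall>x\<in>V. \<psi> x = \<phi> x" unfolding \<psi>_def by simp
  have "d \<le> \<phi> a" "d \<le> \<phi> b" using pot f unfolding distance_potential_def by blast+
  then show new: "\<forall>f'\<in>S'. \<forall>x\<in>f'. Suc d \<le> \<psi> x"
    using S' unfolding \<psi>_def disjnt_def by auto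
  have "edge_lipschitz E \<phi>" using pot unfolding distance_potential_def by blast
  moreover have "{a, b} \<in> E" using f \<open>S \<subseteq> E\<close> by blast
  ultimately have "edge_lipschitz (E \<union> E') \<psi>"
    unfolding \<psi>_def using assms(5,6) by (intro edge_lipschitz_extend)
  moreover have "\<psi> x = 0" if "x \<in> e" for x
  proof -
    have "x \<in> V" using E_V \<open>e \<in> E\<close> that by blast
    with old pot that show ?thesis unfolding distance_potential_def by simp
  qed
  moreover have "d \<le> \<psi> x" if "f' \<in> S - {{a, b}} \<union> S'" "x \<in> f'" for f' x
  proof (cases "f' \<in> S'")
    case True
    with new that(2) have "Suc d \<le> \<psi> x" by blast
    then show ?thesis by simp
  next
    case False
    with that have "f' \<in> S" by blast
    with E_V \<open>S \<subseteq> E\<close> that(2) have "x \<in> V" by blast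
    with old pot \<open>f' \<in> S\<close> that(2) show ?thesis unfolding distance_potential_def by simp
  qed
  ultimately show "distance_potential d (E \<union> E') e (S - {{a, b}} \<union> S') \<psi>"
    unfolding distance_potential_def by blast
qed

lemma safe_forcer_raise_edge:
  assumes isolated: "\<forall>c\<in>{1..r}.
      \<exists>(VD :: nat set) ED \<xi>D eD. safe_forcer r F c VD ED \<xi>D eD \<and> (\<forall>f'\<in>dom \<xi>D. disjnt f' eD)"
    and host: "safe_forcer r F i V E \<xi> e" and pot: "distance_potential d E e (dom \<xi>) \<phi>"
    and "\<xi> f = Some c"
  shows "\<exists>V' E' \<xi>' \<phi>'. safe_forcer r F i V' E' \<xi>' e \<and> distance_potential d E' e (dom \<xi>') \<phi>' \<and>
    (\<forall>f'\<in>dom \<xi>'. (f' \<in> dom \<xi> - {f} \<and> (\<forall>x\<in>f'. \<phi>' x = \<phi> x)) \<or> (\<forall>x\<in>f'. Suc d \<le> \<phi>' x))"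
proof -
  obtain VD ED \<xi>D eD where gadget: "safe_forcer r F c VD ED \<xi>D eD"
    and iso: "\<forall>f'\<in>dom \<xi>D. disjnt f' eD"
    using isolated[rule_format, OF safe_forcer_color[OF host assms(4)]] by blast
  obtain p q where pq: "eD = {p, q}" "p \<noteq> q"
    using graph_edgeE[OF safe_forcerD(1,3)[OF gadget]] by blast
  have dom_E: "dom \<xi> \<subseteq> E" using pcoloring_dom[OF safe_forcerD(2)[OF host]] by blast
  then obtain a b where ab: "f = {a, b}" "a \<noteq> b"
    using graph_edgeE[OF safe_forcerD(1)[OF host]] assms(4) by blast
  obtain g :: "nat \<Rightarrow> nat" where
    sub: "safe_forcer r F i (V \<union> g ` VD) (E \<union> (\<lambda>e. g ` e) ` ED) (substitute_pcoloring g E \<xi> f ED VD \<xi>D) e"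
    and dom: "dom (substitute_pcoloring g E \<xi> f ED VD \<xi>D) = (dom \<xi> - {f}) \<union> (\<lambda>e. g ` e) ` dom \<xi>D"
    and g: "g p = a" "g q = b" "\<And>x. g x \<in> V \<longleftrightarrow> x = p \<or> x = q"
    using safe_forcer_substitute[OF host assms(4) ab gadget[unfolded pq(1)] pq(2)] by metis
  have E_V: "\<forall>e'\<in>E. e' \<subseteq> V" using safe_forcerD(1)[OF host] unfolding graph_def by blast
  have new_edges: "\<forall>e'\<in>(\<lambda>e. g ` e) ` ED. e' \<subseteq> insert a (insert b (- V))" using g by auto
  have new_precolored: "\<forall>f'\<in>(\<lambda>e. g ` e) ` dom \<xi>D. disjnt f' V"
    using iso g(3) unfolding pq(1) disjnt_def by blast
  have "{a, b} \<in> dom \<xi>" using assms(4) ab(1) by blast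
  define \<phi>' where "\<phi>' = (\<lambda>x. if x \<in> V then \<phi> x else min (\<phi> a) (\<phi> b) + 1)"
  note potential = distance_potential_substitute[OF pot \<open>{a, b} \<in> dom \<xi>\<close> dom_E
      safe_forcerD(3)[OF host] E_V new_edges new_precolored, folded ab(1) \<phi>'_def]
  show ?thesis
  proof (intro exI conjI ballI)
    show "distance_potential d (E \<union> (\<lambda>e. g ` e) ` ED) e (dom (substitute_pcoloring g E \<xi> f ED VD \<xi>D)) \<phi>'"
      unfolding dom by (rule potential(1))
    fix f' assume "f' \<in> dom (substitute_pcoloring g E \<xi> f ED VD \<xi>D)"
    then consider "f' \<in> dom \<xi> - {f}" | "f' \<in> (\<lambda>e. g ` e) ` dom \<xi>D" unfolding dom by blast
    then show "(f' \<in> dom \<xi> - {f} \<and> (\<forall>x\<in>f'. \<phi>' x = \<phi> x)) \<or> (\<forall>x\<in>f'. Suc d \<le> \<phi>' x)"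
    proof cases
      case 1
      then have "f' \<subseteq> V" using dom_E E_V by blast
      then have "\<forall>x\<in>f'. \<phi>' x = \<phi> x" unfolding \<phi>'_def by auto
      with 1 show ?thesis by (intro disjI1 conjI)
    next
      case 2
      then have "\<forall>x\<in>f'. Suc d \<le> \<phi>' x" using potential(2) unfolding \<phi>'_def by blast
      then show ?thesis by (rule disjI2)
    qed
  qed (rule sub)
qed

lemma safe_forcer_raise:
  assumes isolated: "\<forall>c\<in>{1..r}.
      \<exists>(VD :: nat set) ED \<xi>D eD. safe_forcer r F c VD ED \<xi>D eD \<and> (\<forall>f'\<in>dom \<xi>D. disjnt f' eD)"
    and host: "safe_forcer r F i V E \<xi> e" and pot: "distance_potential d E e (dom \<xi>) \<phi>"
  shows "\<exists>V' E' \<xi>' \<phi>'. safe_forcer r F i V' E' \<xi>' e \<and> distance_potential (Suc d) E' e (dom \<xi>') \<phi>'"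
proof -
  define P where "P V E \<xi> S \<longleftrightarrow> safe_forcer r F i V E \<xi> e \<and>
      (\<exists>\<phi>. distance_potential d E e (dom \<xi>) \<phi> \<and> (\<forall>f\<in>dom \<xi> - S. \<forall>x\<in>f. Suc d \<le> \<phi> x))"
    for V E \<xi> and S :: "nat set set"
  have "\<exists>V' E' \<xi>'. P V' E' \<xi>' {}"
  proof (rule finite_shrink_invariant)
    show "finite (dom \<xi>)" by (rule safe_forcer_finite_dom[OF host])
    show "P V E \<xi> (dom \<xi>)" unfolding P_def using host pot by blast
  next
    fix V E \<xi> S f assume PS: "P V E \<xi> S" and "f \<in> S"
    show "\<exists>V' E' \<xi>'. P V' E' \<xi>' (S - {f})"
    proof (cases "f \<in> dom \<xi>")
      case False
      then have "dom \<xi> - (S - {f}) = dom \<xi> - S" by auto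
      with PS have "P V E \<xi> (S - {f})" unfolding P_def by simp
      then show ?thesis by blast
    next
      case True
      then obtain c where c: "\<xi> f = Some c" by blast
      from PS have host': "safe_forcer r F i V E \<xi> e"
        and "\<exists>\<phi>. distance_potential d E e (dom \<xi>) \<phi> \<and> (\<forall>f'\<in>dom \<xi> - S. \<forall>x\<in>f'. Suc d \<le> \<phi> x)"
        unfolding P_def by simp_all
      then obtain \<phi> where pot': "distance_potential d E e (dom \<xi>) \<phi>"
        and raised: "\<forall>f'\<in>dom \<xi> - S. \<forall>x\<in>f'. Suc d \<le> \<phi> x"
        by (elim exE conjE) (rule that)
      obtain V' E' \<xi>' \<phi>' where "safe_forcer r F i V' E' \<xi>' e" "distance_potential d E' e (dom \<xi>') \<phi>'"
        and step: "\<forall>f'\<in>dom \<xi>'. (f' \<in> dom \<xi> - {f} \<and> (\<forall>x\<in>f'. \<phi>' x = \<phi> x)) \<or> (\<forall>x\<in>f'. Suc d \<le> \<phi>' x)"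
        using safe_forcer_raise_edge[OF isolated host' pot' c] by (elim exE conjE) (rule that)
      moreover have "\<forall>x\<in>f'. Suc d \<le> \<phi>' x" if "f' \<in> dom \<xi>'" "f' \<notin> S - {f}" for f'
        using step[rule_format, OF that(1)]
      proof
        assume "f' \<in> dom \<xi> - {f} \<and> (\<forall>x\<in>f'. \<phi>' x = \<phi> x)"
        with that(2) have "f' \<in> dom \<xi> - S" "\<forall>x\<in>f'. \<phi>' x = \<phi> x" by blast+
        with raised show ?thesis by simp
      qed
      ultimately have "P V' E' \<xi>' (S - {f})" unfolding P_def by blast
      then show ?thesis by blast
    qed
  qed
  then show ?thesis unfolding P_def distance_potential_def by auto
qed

lemma safe_forcer_distance_potential:
  assumes isolated: "\<forall>c\<in>{1..r}.
      \<exists>(VD :: nat set) ED \<xi>D eD. safe_forcer r F c VD ED \<xi>D eD \<and> (\<forall>f'\<in>dom \<xi>D. disjnt f' eD)"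
    and "i \<in> {1..r}"
  shows "\<exists>(V :: nat set) E \<xi> e \<phi>. safe_forcer r F i V E \<xi> e \<and> distance_potential d E e (dom \<xi>) \<phi>"
proof (induction d)
  case 0
  obtain V :: "nat set" and E \<xi> e where "safe_forcer r F i V E \<xi> e" using isolated assms(2) by blast
  moreover have "distance_potential 0 E e (dom \<xi>) (\<lambda>_. 0)"
    unfolding distance_potential_def edge_lipschitz_def by simp
  ultimately show ?case by blast
next
  case (Suc d)
  then obtain V :: "nat set" and E \<xi> e \<phi> where
    "safe_forcer r F i V E \<xi> e" "distance_potential d E e (dom \<xi>) \<phi>" by blast
  then show ?case using safe_forcer_raise[OF isolated] by blast
qed

theorem lemma6:
  fixes \<F> :: "('a set \<times> 'a set set \<times> ('a set \<Rightarrow> nat)) set" and r :: nat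
  assumes "finite \<F>"
    and "\<forall>(VF, EF, \<phi>)\<in>\<F>. graph VF EF \<and> coloring r EF \<phi>"
    and "\<forall>i\<in>{1..r}. \<exists>(V::nat set) E \<xi> e.
           determiner r \<F> V E \<xi> e i \<and> safe r \<F> V E \<xi> [e]"
  shows "\<forall>(d::nat) i. i \<in> {1..r} \<longrightarrow> (\<exists>(V::nat set) E \<xi> e.
           determiner r \<F> V E \<xi> e i \<and> remote d E e (dom \<xi>) \<and> safe r \<F> V E \<xi> [e])"
proof (intro allI impI)
  fix d i assume i: "i \<in> {1..r}"
  have gadgets: "\<forall>c\<in>{1..r}. \<exists>(V :: nat set) E \<xi> e.
      safe_forcer r \<F> c V E \<xi> e \<and> (\<exists>p\<in>e. \<forall>f\<in>dom \<xi>. p \<notin> f)"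
    using assms(3) unfolding determiner_safe_iff .
  have isolated: "\<forall>c\<in>{1..r}. \<exists>(V :: nat set) E \<xi> e.
      safe_forcer r \<F> c V E \<xi> e \<and> (\<forall>f\<in>dom \<xi>. disjnt f e)"
    using gadgets safe_forcer_isolate[OF gadgets] by meson
  obtain V :: "nat set" and E \<xi> e \<phi> where
    forcer: "safe_forcer r \<F> i V E \<xi> e" and pot: "distance_potential (Suc d) E e (dom \<xi>) \<phi>"
    using safe_forcer_distance_potential[OF isolated i] by blast
  obtain x where "x \<in> e" using graph_edgeE[OF safe_forcerD(1,3)[OF forcer]] by blast
  then have "\<exists>x\<in>e. \<forall>f\<in>dom \<xi>. x \<notin> f" using distance_potential_free_end[OF pot] by blast
  with forcer have "determiner r \<F> V E \<xi> e i \<and> safe r \<F> V E \<xi> [e]"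
    unfolding determiner_safe_iff by blast
  moreover have "remote d E e (dom \<xi>)"
    using distance_potential_remote[OF distance_potential_mono[OF pot]] by simp
  ultimately show "\<exists>(V::nat set) E \<xi> e.
      determiner r \<F> V E \<xi> e i \<and> remote d E e (dom \<xi>) \<and> safe r \<F> V E \<xi> [e]" by blast
qed

end
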